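(* Let $A,B$ be anti-Hermitian $D\times D$ complex matrices with $\|A\|_F<\Delta$ and $\|B\|_F<\Delta$, where $\Delta$ is the constant defined below. Then $$\|M(A,B)\|_F^2\le 2\|A\|_F^2+2\|B\|_F^2-\|A-B\|_F^2 .$$
   Context: Frobenius norm $\|X\|_F=\sqrt{\operatorname{tr}X^\dagger X}$; $\operatorname{ad}(X)(Y)=[X,Y]=XY-YX$, and $\|\operatorname{ad}(X)\|_{\mathrm{op}}=\sup_{Y\ne0}\|[X,Y]\|_F/\|Y\|_F$. For $n\ge0$ and $\vec c=(c_1,\dots,c_n)\in\{0,1\}^n$ (with $n=0$ the empty string $\varnothing$), write $X_0=A$, $X_1=B$, and $w_{\vec c}(A,B)=X_{c_1}X_{c_2}\cdots X_{c_n}$. Real numbers $f(\vec c)$ are defined as the coefficients in the formal power series identity in non-commuting variables $A,B$: $\sum_{k=1}^\infty\frac{(-1)^{k-1}}{k}\big(e^Ae^B-I\big)^{k-1}=\sum_{n\ge0}\sum_{\vec c\in\{0,1\}^n}f(\vec c)\,w_{\vec c}(A,B)$, where $e^A=\sum_j A^j/j!$. For $\vec c\in\{0,1\}^n$ define $g(\vec c)$ by $(n+2)g(\vec c)=-f(c_1,\dots,c_n,1)-(-1)^nf(1-c_1,\dots,1-c_n,1)$, and $h(\vec c)=2g(1,c_1,\dots,c_n)-2g(0,c_1,\dots,c_n)+\sum_{m=0}^n(-1)^m g(c_m,c_{m-1},\dots,c_1)\,g(c_{m+1},\dots,c_n)$. (E.g. $g(\varnothing)=\tfrac12$, $g(0)=\tfrac1{12}$,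 $g(1)=-\tfrac1{12}$, $h(\varnothing)=-\tfrac1{12}$.) Let $\operatorname{ad}_{\vec c}=\operatorname{ad}(X_{c_1})\circ\cdots\circ\operatorname{ad}(X_{c_n})$ (identity for $n=0$). When $\|\operatorname{ad}(A)\|_{\mathrm{op}}+\|\operatorname{ad}(B)\|_{\mathrm{op}}<\log2$, define $M(A,B)=A+B+\sum_{n\ge0}\sum_{\vec c\in\{0,1\}^n}g(\vec c)\operatorname{ad}_{\vec c}([A,B])=A+B+\tfrac12[A,B]+\tfrac1{12}([A,[A,B]]+[B,[B,A]])+\cdots$ (the series converges absolutely there). Finally $\delta=\min\Big(\tfrac1{12}\big(\sum_{n\ge1}\sum_{\vec c\in\{0,1\}^n}|h(\vec c)|(\tfrac{\log2}{3})^n\big)^{-1},\,1\Big)>0$ and $\Delta=\min\big(\tfrac{\log2}{6}\delta,\ \tfrac14\log2\big)$. *)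

theory Defs
  imports "HOL-Analysis.Analysis"
begin

(* Words c in {0,1}^n are bool lists; False = 0 (letter A), True = 1 (letter B). *)

(* Formal power series in the non-commuting variables A, B: coefficient functions on words *)
type_synonym ncps = "bool list \<Rightarrow> real"

definition nc_one :: ncps where
  "nc_one w = (if w = [] then 1 else 0)"

definition nc_mult :: "ncps \<Rightarrow> ncps \<Rightarrow> ncps" where
  "nc_mult p q w = (\<Sum>k\<in>{0..length w}. p (take k w) * q (drop k w))"

primrec nc_pow :: "ncps \<Rightarrow> nat \<Rightarrow> ncps" where
  "nc_pow p 0 = nc_one"
| "nc_pow p (Suc k) = nc_mult p (nc_pow p k)"

(* e^A = sum_j A^j / j!  and  e^B = sum_j B^j / j! *)
definition nc_expA :: ncps where
  "nc_expA w = (if (\<forall>x\<in>set w. \<not> x) then 1 / fact (length w) else 0)"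

definition nc_expB :: ncps where
  "nc_expB w = (if (\<forall>x\<in>set w. x) then 1 / fact (length w) else 0)"

definition nc_E :: ncps where
  "nc_E w = nc_mult nc_expA nc_expB w - nc_one w"

(* f(c): coefficient of w_c in sum_{k>=1} (-1)^(k-1)/k (e^A e^B - I)^(k-1);
   for each word only finitely many terms are nonzero *)
definition fcoef :: "bool list \<Rightarrow> real" where
  "fcoef c = (\<Sum>k. (-1) ^ k / real (k + 1) * nc_pow nc_E k c)"

definition gcoef :: "bool list \<Rightarrow> real" where
  "gcoef c = (- fcoef (c @ [True]) - (-1) ^ length c * fcoef (map Not c @ [True]))
              / real (length c + 2)"

definition hcoef :: "bool list \<Rightarrow> real" where
  "hcoef c = 2 * gcoef (True # c) - 2 * gcoef (False # c)
     + (\<Sum>m\<in>{0..length c}. (-1) ^ m * gcoef (rev (take m c)) * gcoef (drop m c))"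

definition deltaC :: real where
  "deltaC = min ((1/12) * inverse
      (\<Sum>n. \<Sum>c\<in>{c :: bool list. length c = Suc n}. \<bar>hcoef c\<bar> * (ln 2 / 3) ^ Suc n)) 1"

definition DeltaC :: real where
  "DeltaC = min (ln 2 / 6 * deltaC) (ln 2 / 4)"

(* matrices: D x D complex matrices, D = CARD('n) *)
definition cadj :: "complex^'n^'n \<Rightarrow> complex^'n^'n" where
  "cadj X = (\<chi> i j. cnj (X $ j $ i))"

definition frob :: "complex^'n^'n \<Rightarrow> real" where
  "frob X = sqrt (Re (trace (cadj X ** X)))"

definition anti_hermitian :: "complex^'n^'n \<Rightarrow> bool" where
  "anti_hermitian X \<longleftrightarrow> cadj X = - X"

definition ad :: "complex^'n^'n \<Rightarrow> complex^'n^'n \<Rightarrow> complex^'n^'n" where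
  "ad X Y = X ** Y - Y ** X"

definition Xl :: "complex^'n^'n \<Rightarrow> complex^'n^'n \<Rightarrow> bool \<Rightarrow> complex^'n^'n" where
  "Xl A B b = (if b then B else A)"

definition adw :: "complex^'n^'n \<Rightarrow> complex^'n^'n \<Rightarrow> bool list \<Rightarrow> complex^'n^'n \<Rightarrow> complex^'n^'n" where
  "adw A B c Y = foldr (\<lambda>b Z. ad (Xl A B b) Z) c Y"

definition Mser :: "complex^'n^'n \<Rightarrow> complex^'n^'n \<Rightarrow> complex^'n^'n" where
  "Mser A B = A + B + (\<Sum>n. \<Sum>c\<in>{c :: bool list. length c = n}.
                          gcoef c *\<^sub>R adw A B c (ad A B))"

end

(*
  Write M(A,B) = A + B + R, where R is the sum of the homogeneous parts
  M_n = sum_{|c| = n} g(c) ad_c [A,B].  Then |M|^2 = |A + B|^2 + 2<A + B, R> + |R|^2,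
  and |A + B|^2 is the right-hand side by the parallelogram law, so it suffices to
  show 2<A + B, R> + |R|^2 <= 0.  For anti-Hermitian A, B every ad(X) is skew-adjoint
  for the Frobenius inner product, so each cross term <M_i, M_j> and <A + B, M_n> can
  be rewritten as a combination of <K, ad_w K> with K = [A,B].  Collecting by degree,
  2<A + B, R> + |R|^2 = sum_N sum_{|w| = N} h(w) <K, ad_w K>.  The N = 0 term is
  -|K|^2/12, and |ad_w K| <= (2 max(|A|,|B|))^|w| |K| bounds the remaining terms by
  delta |K|^2 sum_{n >= 1} sum_{|c| = n} |h(c)| (log 2 / 3)^n <= |K|^2/12.  All series
  converge absolutely because sum_{|c| = n} |f(c)| <= 4^n, which follows by induction
  from (e^A e^B - I)^(k+1) = (e^A e^B - I)(e^A e^B - I)^k, the coefficients of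
  e^A e^B - I in degree j summing to at most 2^j.
*)
theory Submission
  imports Defs
begin

section \<open>The Frobenius inner product\<close>

definition cinner :: "complex^'n^'n \<Rightarrow> complex^'n^'n \<Rightarrow> complex" where
  "cinner X Y = (\<Sum>i\<in>UNIV. \<Sum>j\<in>UNIV. cnj (X$i$j) * Y$i$j)"

lemma inner_eq_Re_cinner: "inner (X::complex^'n^'n) Y = Re (cinner X Y)"
  by (simp add: inner_vec_def inner_complex_def cinner_def Re_sum)

lemma frob_eq_norm: "frob (X::complex^'n^'n) = norm X"
proof -
  have "Re (trace (cadj X ** X)) = inner X X"
    unfolding trace_def inner_eq_Re_cinner cinner_def cadj_def matrix_matrix_mult_def
    by (simp only: vec_lambda_beta Re_sum) (rule sum.swap)
  then show ?thesis by (simp add: frob_def norm_eq_sqrt_inner)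
qed

lemma cinner_matrix_mult_left: "cinner X ((Z::complex^'n^'n) ** W) = cinner (cadj Z ** X) W"
proof -
  have "cinner X (Z ** W) = (\<Sum>i\<in>UNIV. \<Sum>j\<in>UNIV. \<Sum>k\<in>UNIV. cnj (X$i$j) * Z$i$k * W$k$j)"
    unfolding cinner_def matrix_matrix_mult_def
    by (simp add: sum_distrib_left mult.assoc)
  also have "\<dots> = (\<Sum>k\<in>UNIV. \<Sum>j\<in>UNIV. \<Sum>i\<in>UNIV. cnj (X$i$j) * Z$i$k * W$k$j)"
    by (subst sum.swap, subst (2) sum.swap, rule sum.swap)
  also have "\<dots> = cinner (cadj Z ** X) W"
    unfolding cinner_def matrix_matrix_mult_def cadj_def
    by (simp add: sum_distrib_right sum_distrib_left mult.commute mult.left_commute)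
  finally show ?thesis .
qed

lemma cinner_matrix_mult_right: "cinner X ((W::complex^'n^'n) ** Z) = cinner (X ** cadj Z) W"
proof -
  have "cinner X (W ** Z) = (\<Sum>i\<in>UNIV. \<Sum>j\<in>UNIV. \<Sum>k\<in>UNIV. cnj (X$i$j) * W$i$k * Z$k$j)"
    unfolding cinner_def matrix_matrix_mult_def
    by (simp add: sum_distrib_left mult.assoc)
  also have "\<dots> = (\<Sum>i\<in>UNIV. \<Sum>k\<in>UNIV. \<Sum>j\<in>UNIV. cnj (X$i$j) * W$i$k * Z$k$j)"
    by (rule sum.cong[OF refl], rule sum.swap)
  also have "\<dots> = cinner (X ** cadj Z) W"
    unfolding cinner_def matrix_matrix_mult_def cadj_def
    by (simp add: sum_distrib_right sum_distrib_left mult.commute mult.left_commute)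
  finally show ?thesis .
qed

lemma matrix_mult_uminus:
  "(- (A::complex^'n^'n)) ** X = - (A ** X)" "X ** (- A) = - (X ** A)"
  by (simp_all add: matrix_matrix_mult_def vec_eq_iff sum_negf)

lemma matrix_add_rdistrib: "((A::complex^'n^'n) + B) ** C = A ** C + B ** C"
  by (simp add: matrix_matrix_mult_def vec_eq_iff sum.distrib ring_distribs)

lemma cinner_uminus_left: "cinner (- Y) X = - cinner Y X"
  by (simp add: cinner_def sum_negf)

lemma inner_ad_skew:
  assumes "anti_hermitian (A::complex^'n^'n)"
  shows "inner X (ad A Y) = - inner (ad A X) Y"
proof -
  have adj: "cadj A = - A" using assms by (simp add: anti_hermitian_def)
  have "cinner X (A ** Y) = - cinner (A ** X) Y" "cinner X (Y ** A) = - cinner (X ** A) Y"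
    by (simp_all only: cinner_matrix_mult_left[of X A] cinner_matrix_mult_right[of X Y A] adj
        matrix_mult_uminus cinner_uminus_left)
  then show ?thesis
    by (simp add: inner_eq_Re_cinner ad_def cinner_def sum_subtractf ring_distribs)
qed

lemma norm_matrix_mult_le:
  fixes X Y :: "complex^'n^'n"
  shows "norm (X ** Y) \<le> norm X * norm Y"
proof -
  let ?row = "\<lambda>i. \<Sum>k\<in>UNIV. (cmod (X$i$k))\<^sup>2" and ?col = "\<lambda>j. \<Sum>k\<in>UNIV. (cmod (Y$k$j))\<^sup>2"
  have norm_sq: "norm Z ^ 2 = (\<Sum>i\<in>UNIV. \<Sum>j\<in>UNIV. (cmod (Z$i$j))\<^sup>2)" for Z :: "complex^'n^'n"
    by (simp add: norm_vec_def L2_set_def sum_nonneg)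
  have entry: "(cmod ((X ** Y)$i$j))\<^sup>2 \<le> ?row i * ?col j" for i j
  proof -
    have "cmod ((X ** Y)$i$j) \<le> (\<Sum>k\<in>UNIV. cmod (X$i$k) * cmod (Y$k$j))"
      unfolding matrix_matrix_mult_def by (simp add: norm_mult[symmetric] norm_sum)
    then have "(cmod ((X ** Y)$i$j))\<^sup>2 \<le> (\<Sum>k\<in>UNIV. cmod (X$i$k) * cmod (Y$k$j))\<^sup>2"
      by (simp add: power_mono)
    also have "\<dots> \<le> ?row i * ?col j"
      by (rule Cauchy_Schwarz_ineq_sum)
    finally show ?thesis .
  qed
  have "norm (X ** Y) ^ 2 \<le> (\<Sum>i\<in>UNIV. \<Sum>j\<in>UNIV. ?row i * ?col j)"
    unfolding norm_sq[of "X ** Y"] by (intro sum_mono entry)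
  also have "\<dots> = (\<Sum>i\<in>UNIV. ?row i) * (\<Sum>j\<in>UNIV. ?col j)"
    by (simp only: sum_product)
  also have "\<dots> = (norm X * norm Y)\<^sup>2"
  proof -
    have "(\<Sum>j\<in>UNIV. ?col j) = norm Y ^ 2" by (simp only: norm_sq) (rule sum.swap)
    then show ?thesis by (simp only: norm_sq power_mult_distrib)
  qed
  finally show ?thesis by (simp add: power_mono_iff[symmetric])
qed

lemma norm_ad_le: "norm (ad (X::complex^'n^'n) Y) \<le> 2 * norm X * norm Y"
proof -
  have "norm (ad X Y) \<le> norm (X ** Y) + norm (Y ** X)"
    unfolding ad_def by (rule norm_triangle_ineq4)
  also have "\<dots> \<le> norm X * norm Y + norm Y * norm X"
    by (intro add_mono norm_matrix_mult_le)
  finally show ?thesis by simp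
qed

lemma ad_add_right: "ad A ((A::complex^'n^'n) + B) = ad A B" "ad B (A + B) = - ad A B"
  by (simp_all add: ad_def matrix_add_ldistrib matrix_add_rdistrib algebra_simps)

lemma inner_add_ad_eq_0:
  assumes "anti_hermitian A" "anti_hermitian B"
  shows "inner ((A::complex^'n^'n) + B) (ad A B) = 0"
proof -
  have "ad A A = 0" "ad B B = 0" "ad B A = - ad A B" by (simp_all add: ad_def)
  then show ?thesis
    using inner_ad_skew[OF assms(1), of A B] inner_ad_skew[OF assms(2), of B A]
    by (simp add: inner_add_left)
qed

section \<open>Sums over words\<close>

abbreviation words :: "nat \<Rightarrow> bool list set" where
  "words n \<equiv> {c. length c = n}"

lemma finite_words: "finite (words n)"
  using finite_lists_length_eq[of "UNIV::bool set" n] by simp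

lemma words_0: "words 0 = {[]}"
  by auto

lemma sum_words_take_drop:
  assumes "k \<le> n"
  shows "(\<Sum>w\<in>words n. F (take k w) (drop k w)) = (\<Sum>u\<in>words k. \<Sum>v\<in>words (n - k). F u v)"
proof -
  have "(\<Sum>w\<in>words n. F (take k w) (drop k w)) = (\<Sum>(u, v)\<in>words k \<times> words (n - k). F u v)"
    by (rule sum.reindex_bij_witness[where j = "\<lambda>w. (take k w, drop k w)" and i = "\<lambda>(u, v). u @ v"])
       (use assms in auto)
  then show ?thesis
    by (simp add: sum.cartesian_product)
qed

lemma sum_words_Suc: "(\<Sum>c\<in>words (Suc n). f c) = (\<Sum>w\<in>words n. f (False # w) + f (True # w))"
proof -
  have "(\<Sum>c\<in>words (Suc n). f c) = (\<Sum>(b, w)\<in>UNIV \<times> words n. f (b # w))"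
    by (rule sum.reindex_bij_witness[where j = "\<lambda>c. (hd c, tl c)" and i = "\<lambda>(b, w). b # w"])
       (auto simp: length_Suc_conv)
  then show ?thesis
    by (simp add: sum.cartesian_product[symmetric] UNIV_bool sum.distrib)
qed

lemma sum_words_rev: "(\<Sum>c\<in>words n. f (rev c)) = (\<Sum>c\<in>words n. f c)"
  by (rule sum.reindex_bij_witness[where j = rev and i = rev]) auto

definition word_sum :: "ncps \<Rightarrow> nat \<Rightarrow> real" where
  "word_sum p n = (\<Sum>c\<in>words n. p c)"

lemma word_sum_nc_mult:
  "word_sum (nc_mult p q) n = (\<Sum>j\<le>n. word_sum p j * word_sum q (n - j))"
proof -
  have "word_sum (nc_mult p q) n = (\<Sum>c\<in>words n. \<Sum>j\<le>n. p (take j c) * q (drop j c))"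
    unfolding word_sum_def by (rule sum.cong) (auto simp: nc_mult_def atLeast0AtMost)
  also have "\<dots> = (\<Sum>j\<le>n. \<Sum>c\<in>words n. p (take j c) * q (drop j c))"
    by (rule sum.swap)
  also have "\<dots> = (\<Sum>j\<le>n. word_sum p j * word_sum q (n - j))"
    by (intro sum.cong refl)
       (simp add: sum_words_take_drop[where F = "\<lambda>u v. p u * q v"] word_sum_def sum_product)
  finally show ?thesis .
qed

section \<open>Growth of the coefficients\<close>

lemma nc_E_Nil: "nc_E [] = 0"
  by (simp add: nc_E_def nc_mult_def nc_expA_def nc_expB_def nc_one_def)

lemma nc_E_nonneg: "0 \<le> nc_E c"
proof (cases "c = []")
  case False
  have "0 \<le> nc_mult nc_expA nc_expB c"
    unfolding nc_mult_def nc_expA_def nc_expB_def by (intro sum_nonneg) auto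
  with False show ?thesis by (simp add: nc_E_def nc_one_def)
qed (simp add: nc_E_Nil)

lemma nc_pow_E_nonneg: "0 \<le> nc_pow nc_E k c"
  by (induction k arbitrary: c)
     (auto simp: nc_one_def nc_mult_def intro!: sum_nonneg mult_nonneg_nonneg nc_E_nonneg)

lemma nc_pow_E_eq_0: "length c < k \<Longrightarrow> nc_pow nc_E k c = 0"
proof (induction k arbitrary: c)
  case (Suc k)
  have terms_0: "nc_E (take j c) * nc_pow nc_E k (drop j c) = 0" if "j \<le> length c" for j
    using Suc that by (cases "j = 0") (simp_all add: nc_E_Nil)
  show ?case
    unfolding nc_pow.simps nc_mult_def using terms_0 by (intro sum.neutral) auto
qed simp

lemma fcoef_eq_sum: "fcoef c = (\<Sum>k\<le>length c. (-1)^k / real (k + 1) * nc_pow nc_E k c)"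
  unfolding fcoef_def by (rule suminf_finite) (auto simp: nc_pow_E_eq_0)

lemma abs_fcoef_le: "\<bar>fcoef c\<bar> \<le> (\<Sum>k\<le>length c. nc_pow nc_E k c)"
proof -
  have "\<bar>fcoef c\<bar> \<le> (\<Sum>k\<le>length c. \<bar>(-1)^k / real (k + 1) * nc_pow nc_E k c\<bar>)"
    unfolding fcoef_eq_sum by (rule sum_abs)
  also have "\<dots> \<le> (\<Sum>k\<le>length c. nc_pow nc_E k c)"
    by (intro sum_mono) (simp add: abs_mult power_abs nc_pow_E_nonneg field_simps)
  finally show ?thesis .
qed

lemma word_sum_expA: "word_sum nc_expA n = 1 / fact n"
proof -
  have "word_sum nc_expA n = (\<Sum>c\<in>words n. if c = replicate n False then 1 / fact n else 0)"
    unfolding word_sum_def nc_expA_def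
    by (intro sum.cong refl) (auto simp: replicate_length_same intro: replicate_eqI)
  then show ?thesis
    using finite_words[of n] by (simp add: sum.delta)
qed

lemma word_sum_expB: "word_sum nc_expB n = 1 / fact n"
proof -
  have "word_sum nc_expB n = (\<Sum>c\<in>words n. if c = replicate n True then 1 / fact n else 0)"
    unfolding word_sum_def nc_expB_def
    by (intro sum.cong refl) (auto simp: replicate_length_same intro: replicate_eqI)
  then show ?thesis
    using finite_words[of n] by (simp add: sum.delta)
qed

lemma word_sum_nc_E_le: "word_sum nc_E n \<le> 2 ^ n"
proof -
  have "word_sum nc_E n \<le> word_sum (nc_mult nc_expA nc_expB) n"
    unfolding word_sum_def nc_E_def nc_one_def by (intro sum_mono) simp
  also have "\<dots> = (\<Sum>j\<le>n. 1 / fact j * (1 / fact (n - j)))"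
    by (simp add: word_sum_nc_mult word_sum_expA word_sum_expB)
  also have "\<dots> \<le> (\<Sum>j\<le>n. 1)"
    by (intro sum_mono mult_le_one) (simp_all add: divide_le_eq_1 fact_ge_1)
  also have "\<dots> \<le> 2 ^ n"
  proof -
    have "real (Suc n) \<le> real (2 ^ n)"
      using less_exp[of n] by (simp only: of_nat_le_iff Suc_le_eq)
    then show ?thesis by simp
  qed
  finally show ?thesis .
qed

lemma sum_half_powers: "(\<Sum>j<n. (1/2::real) ^ Suc j) = 1 - (1/2) ^ n"
  by (induction n) simp_all

lemma word_sum_nc_pow_E_Suc:
  "word_sum (nc_pow nc_E (Suc k)) n
    = (\<Sum>j<n. word_sum nc_E (Suc j) * word_sum (nc_pow nc_E k) (n - Suc j))"
  unfolding nc_pow.simps word_sum_nc_mult sum.atMost_shift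
  by (simp add: word_sum_def words_0 nc_E_Nil)

lemma word_sum_nc_pow_E_le: "(\<Sum>k\<le>n. word_sum (nc_pow nc_E k) n) \<le> 4 ^ n"
proof (induction n rule: less_induct)
  case (less n)
  show ?case
  proof (cases n)
    case 0
    then show ?thesis by (simp add: word_sum_def words_0 nc_one_def)
  next
    case (Suc m)
    have tail_le: "(\<Sum>k\<le>m. word_sum (nc_pow nc_E k) (m - j)) \<le> 4 ^ (m - j)" for j
    proof -
      have "(\<Sum>k\<le>m. word_sum (nc_pow nc_E k) (m - j)) = (\<Sum>k\<le>m - j. word_sum (nc_pow nc_E k) (m - j))"
        by (rule sum.mono_neutral_right) (auto simp: word_sum_def nc_pow_E_eq_0)
      also have "\<dots> \<le> 4 ^ (m - j)"
        using less.IH Suc by simp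
      finally show ?thesis .
    qed
    have powers: "2 ^ Suc j * 4 ^ (m - j) = 4 ^ n * (1/2::real) ^ Suc j" if "j < n" for j
    proof -
      have "(4::real) ^ n = 4 ^ Suc j * 4 ^ (m - j)"
        using that by (simp add: Suc power_add[symmetric])
      also have "(4::real) ^ Suc j = 2 ^ Suc j * 2 ^ Suc j"
        by (simp add: power_mult_distrib[symmetric])
      finally show ?thesis
        by (simp add: power_one_over)
    qed
    have "(\<Sum>k\<le>n. word_sum (nc_pow nc_E k) n) = (\<Sum>k\<le>m. word_sum (nc_pow nc_E (Suc k)) n)"
      unfolding Suc sum.atMost_Suc_shift
      by (simp add: word_sum_def nc_one_def, intro sum.neutral) auto
    also have "\<dots> = (\<Sum>j<n. word_sum nc_E (Suc j) * (\<Sum>k\<le>m. word_sum (nc_pow nc_E k) (m - j)))"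
      by (simp only: word_sum_nc_pow_E_Suc Suc diff_Suc_Suc sum_distrib_left) (rule sum.swap)
    also have "\<dots> \<le> (\<Sum>j<n. 2 ^ Suc j * 4 ^ (m - j))"
      by (intro sum_mono mult_mono word_sum_nc_E_le tail_le)
         (auto simp: word_sum_def intro!: sum_nonneg nc_pow_E_nonneg)
    also have "\<dots> = (\<Sum>j<n. 4 ^ n * (1/2) ^ Suc j)"
      by (intro sum.cong refl) (simp only: lessThan_iff powers)
    also have "\<dots> = 4 ^ n * (1 - (1/2) ^ n)"
      by (simp only: sum_distrib_left[symmetric] sum_half_powers)
    also have "\<dots> \<le> 4 ^ n"
      by simp
    finally show ?thesis .
  qed
qed

lemma sum_abs_fcoef_le: "(\<Sum>c\<in>words n. \<bar>fcoef c\<bar>) \<le> 4 ^ n"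
proof -
  have "(\<Sum>c\<in>words n. \<bar>fcoef c\<bar>) \<le> (\<Sum>c\<in>words n. \<Sum>k\<le>n. nc_pow nc_E k c)"
    using abs_fcoef_le by (intro sum_mono) auto
  also have "\<dots> = (\<Sum>k\<le>n. word_sum (nc_pow nc_E k) n)"
    unfolding word_sum_def by (rule sum.swap)
  finally show ?thesis
    using word_sum_nc_pow_E_le[of n] by simp
qed

lemma sum_abs_fcoef_inj_le:
  assumes "inj_on h (words n)" and "h ` words n \<subseteq> words m"
  shows "(\<Sum>c\<in>words n. \<bar>fcoef (h c)\<bar>) \<le> 4 ^ m"
proof -
  have "(\<Sum>c\<in>words n. \<bar>fcoef (h c)\<bar>) = (\<Sum>d\<in>h ` words n. \<bar>fcoef d\<bar>)"
    using assms(1) by (simp add: sum.reindex)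
  also have "\<dots> \<le> (\<Sum>d\<in>words m. \<bar>fcoef d\<bar>)"
    by (rule sum_mono2[OF finite_words assms(2)]) auto
  finally show ?thesis
    using sum_abs_fcoef_le[of m] by simp
qed

lemma abs_gcoef_le: "\<bar>gcoef c\<bar> \<le> (\<bar>fcoef (c @ [True])\<bar> + \<bar>fcoef (map Not c @ [True])\<bar>) / 2"
proof -
  have numerator_le: "\<bar>- fcoef (c @ [True]) - (-1) ^ length c * fcoef (map Not c @ [True])\<bar>
      \<le> \<bar>fcoef (c @ [True])\<bar> + \<bar>fcoef (map Not c @ [True])\<bar>"
    by (rule order_trans[OF abs_triangle_ineq4]) (simp add: abs_mult power_abs)
  show ?thesis
    unfolding gcoef_def abs_divide by (rule frac_le[OF _ numerator_le]) auto
qed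

lemma sum_abs_gcoef_le: "(\<Sum>c\<in>words n. \<bar>gcoef c\<bar>) \<le> 4 ^ (n + 1)"
proof -
  have "(\<Sum>c\<in>words n. \<bar>gcoef c\<bar>)
      \<le> (\<Sum>c\<in>words n. (\<bar>fcoef (c @ [True])\<bar> + \<bar>fcoef (map Not c @ [True])\<bar>) / 2)"
    by (intro sum_mono abs_gcoef_le)
  also have "\<dots> = ((\<Sum>c\<in>words n. \<bar>fcoef (c @ [True])\<bar>) + (\<Sum>c\<in>words n. \<bar>fcoef (map Not c @ [True])\<bar>)) / 2"
    by (simp only: sum.distrib sum_divide_distrib add_divide_distrib)
  also have "\<dots> \<le> (4 ^ (n + 1) + 4 ^ (n + 1)) / 2"
    by (intro divide_right_mono add_mono sum_abs_fcoef_inj_le) (auto simp: inj_on_def)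
  finally show ?thesis by simp
qed

lemma sum_abs_gcoef_convolution_le:
  "(\<Sum>c\<in>words n. \<Sum>m\<le>n. \<bar>gcoef (rev (take m c))\<bar> * \<bar>gcoef (drop m c)\<bar>) \<le> real (n + 1) * 4 ^ (n + 2)"
proof -
  have "(\<Sum>c\<in>words n. \<bar>gcoef (rev (take m c))\<bar> * \<bar>gcoef (drop m c)\<bar>)
      = (\<Sum>u\<in>words m. \<bar>gcoef u\<bar>) * (\<Sum>v\<in>words (n - m). \<bar>gcoef v\<bar>)" if "m \<le> n" for m
    using that
    by (simp only: sum_words_take_drop[where F = "\<lambda>u v. \<bar>gcoef (rev u)\<bar> * \<bar>gcoef v\<bar>"]
        sum_product[symmetric] sum_words_rev[of "\<lambda>u. \<bar>gcoef u\<bar>" m])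
  then have "(\<Sum>c\<in>words n. \<Sum>m\<le>n. \<bar>gcoef (rev (take m c))\<bar> * \<bar>gcoef (drop m c)\<bar>)
      = (\<Sum>m\<le>n. (\<Sum>u\<in>words m. \<bar>gcoef u\<bar>) * (\<Sum>v\<in>words (n - m). \<bar>gcoef v\<bar>))"
    by (subst sum.swap) simp
  also have "\<dots> \<le> (\<Sum>m\<le>n. 4 ^ (m + 1) * 4 ^ (n - m + 1))"
    by (intro sum_mono mult_mono sum_abs_gcoef_le sum_nonneg) auto
  also have "\<dots> = (\<Sum>m\<le>n. 4 ^ (n + 2))"
    by (intro sum.cong refl) (auto simp: power_add[symmetric])
  finally show ?thesis by simp
qed

lemma sum_abs_hcoef_le: "(\<Sum>c\<in>words n. \<bar>hcoef c\<bar>) \<le> real (n + 3) * 4 ^ (n + 2)"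
proof -
  let ?g = "\<lambda>c. \<bar>gcoef c\<bar>"
  have hcoef_le: "\<bar>hcoef c\<bar> \<le> 2 * (?g (False # c) + ?g (True # c))
      + (\<Sum>m\<le>n. ?g (rev (take m c)) * ?g (drop m c))" if "c \<in> words n" for c
  proof -
    have "\<bar>\<Sum>m\<in>{0..length c}. (-1) ^ m * gcoef (rev (take m c)) * gcoef (drop m c)\<bar>
        \<le> (\<Sum>m\<le>n. ?g (rev (take m c)) * ?g (drop m c))"
      using that by (rule_tac order_trans[OF sum_abs]) (simp add: abs_mult power_abs atLeast0AtMost)
    then show ?thesis
      unfolding hcoef_def by (smt (verit))
  qed
  have "(\<Sum>c\<in>words n. \<bar>hcoef c\<bar>) \<le> (\<Sum>c\<in>words n. 2 * (?g (False # c) + ?g (True # c))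
      + (\<Sum>m\<le>n. ?g (rev (take m c)) * ?g (drop m c)))"
    by (rule sum_mono) (rule hcoef_le)
  also have "\<dots> = 2 * (\<Sum>c\<in>words (Suc n). ?g c)
      + (\<Sum>c\<in>words n. \<Sum>m\<le>n. ?g (rev (take m c)) * ?g (drop m c))"
    by (simp add: sum.distrib sum_words_Suc sum_distrib_left)
  also have "\<dots> \<le> 2 * 4 ^ (n + 2) + real (n + 1) * 4 ^ (n + 2)"
    using sum_abs_gcoef_le[of "Suc n"] sum_abs_gcoef_convolution_le[of n] by simp
  finally show ?thesis by (simp add: algebra_simps)
qed

definition hcoef_majorant :: "nat \<Rightarrow> real" where
  "hcoef_majorant n = (\<Sum>c\<in>words (Suc n). \<bar>hcoef c\<bar> * (ln 2 / 3) ^ Suc n)"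

lemma hcoef_majorant_nonneg: "0 \<le> hcoef_majorant n"
  unfolding hcoef_majorant_def by (intro sum_nonneg) simp

lemma hcoef_majorant_le: "hcoef_majorant n \<le> 480 * (25/26) ^ n"
proof -
  have lin_le_exp: "real n + 4 \<le> 30 * (27/26) ^ n"
    using Bernoulli_inequality[of "1/26::real" n] by simp
  have "hcoef_majorant n \<le> real (Suc n + 3) * 4 ^ (Suc n + 2) * (ln 2 / 3) ^ Suc n"
    unfolding hcoef_majorant_def sum_distrib_right[symmetric]
    by (intro mult_right_mono sum_abs_hcoef_le) simp
  also have "\<dots> = 16 * (real n + 4) * (4 * (ln 2 / 3)) ^ Suc n"
    unfolding power_mult_distrib by (simp add: power_add algebra_simps)
  also have "\<dots> \<le> 16 * (30 * (27/26) ^ n) * (25/27) ^ Suc n"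
    using ln2_le_25_over_36 lin_le_exp by (intro mult_mono power_mono) auto
  also have "\<dots> = 480 * (25/26) ^ n * (25/27)"
    by (simp add: power_mult_distrib[symmetric])
  also have "\<dots> \<le> 480 * (25/26) ^ n"
    by simp
  finally show ?thesis .
qed

lemma summable_hcoef_majorant: "summable hcoef_majorant"
  by (rule summable_comparison_test'[where N = 0, OF summable_mult[OF summable_geometric]])
     (use hcoef_majorant_le hcoef_majorant_nonneg in auto)

lemma deltaC_bounds: "0 \<le> deltaC" "deltaC \<le> 1" "deltaC * suminf hcoef_majorant \<le> 1/12"
proof -
  have deltaC_eq: "deltaC = min (1/12 * inverse (suminf hcoef_majorant)) 1"
    unfolding deltaC_def hcoef_majorant_def[abs_def] ..
  have "0 \<le> suminf hcoef_majorant"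
    by (rule suminf_nonneg[OF summable_hcoef_majorant hcoef_majorant_nonneg])
  then show "0 \<le> deltaC" "deltaC \<le> 1" "deltaC * suminf hcoef_majorant \<le> 1/12"
    unfolding deltaC_eq by (auto simp: min_def field_simps)
qed

lemma hcoef_Nil: "hcoef [] = - 1/12"
proof -
  have "nc_E [True] = 1" "nc_E [False] = 1" "nc_E [True, True] = 1/2" "nc_E [False, True] = 1"
    by (auto simp: nc_E_def nc_mult_def nc_expA_def nc_expB_def nc_one_def numeral_2_eq_2)
  then have f: "fcoef [True] = - 1/2" "fcoef [True, True] = 1/12" "fcoef [False, True] = - 1/6"
    by (simp_all add: fcoef_eq_sum nc_mult_def nc_one_def nc_E_Nil numeral_2_eq_2)
  have g: "gcoef [] = 1/2" "gcoef [False] = 1/12" "gcoef [True] = - 1/12"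
    by (simp_all add: gcoef_def f)
  show ?thesis
    by (simp add: hcoef_def g)
qed

section \<open>Nested commutators\<close>

lemma adw_Nil: "adw A B [] Y = Y"
  by (simp add: adw_def)

lemma adw_Cons: "adw A B (b # c) Y = ad (Xl A B b) (adw A B c Y)"
  by (simp add: adw_def)

lemma adw_append: "adw A B (c @ d) Y = adw A B c (adw A B d Y)"
  by (simp add: adw_def)

lemma inner_adw_adjoint:
  assumes "anti_hermitian A" "anti_hermitian B"
  shows "inner (adw A B c X) Y = (-1) ^ length c * inner X (adw A B (rev c) Y)"
proof (induction c arbitrary: Y)
  case (Cons b c)
  have "anti_hermitian (Xl A B b)"
    using assms by (simp add: Xl_def)
  then have "inner (adw A B (b # c) X) Y = - inner (adw A B c X) (ad (Xl A B b) Y)"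
    unfolding adw_Cons by (simp add: inner_ad_skew)
  with Cons.IH show ?case
    by (simp add: adw_append adw_Cons adw_Nil)
qed (simp add: adw_Nil)

lemma norm_adw_le:
  assumes "norm A \<le> r" "norm B \<le> r"
  shows "norm (adw A B c Y) \<le> (2 * r) ^ length c * norm Y"
proof (induction c)
  case (Cons b c)
  have "0 \<le> r"
    using assms(1) by (rule order_trans[OF norm_ge_zero])
  have "norm (adw A B (b # c) Y) \<le> 2 * norm (Xl A B b) * norm (adw A B c Y)"
    unfolding adw_Cons by (rule norm_ad_le)
  also have "\<dots> \<le> 2 * r * ((2 * r) ^ length c * norm Y)"
    using assms Cons.IH \<open>0 \<le> r\<close> by (intro mult_mono) (auto simp: Xl_def)
  finally show ?case by simp
qed (simp add: adw_Nil)

section \<open>The quadratic form of the series\<close>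

definition Mterm :: "complex^'n^'n \<Rightarrow> complex^'n^'n \<Rightarrow> nat \<Rightarrow> complex^'n^'n" where
  "Mterm A B n = (\<Sum>c\<in>words n. gcoef c *\<^sub>R adw A B c (ad A B))"

definition Qform :: "complex^'n^'n \<Rightarrow> complex^'n^'n \<Rightarrow> nat \<Rightarrow> real" where
  "Qform A B n = (\<Sum>w\<in>words n. hcoef w * inner (ad A B) (adw A B w (ad A B)))"

lemma norm_Mterm_le:
  assumes "norm A \<le> r" "norm B \<le> r"
  shows "norm (Mterm A B n) \<le> 4 * norm (ad A B) * (8 * r) ^ n"
proof -
  have r: "0 \<le> r"
    using assms(1) by (rule order_trans[OF norm_ge_zero])
  have "norm (gcoef c *\<^sub>R adw A B c (ad A B)) \<le> \<bar>gcoef c\<bar> * ((2 * r) ^ n * norm (ad A B))"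
    if "c \<in> words n" for c
    using norm_adw_le[OF assms, of c "ad A B"] that by (simp add: mult_left_mono)
  then have "norm (Mterm A B n) \<le> (\<Sum>c\<in>words n. \<bar>gcoef c\<bar> * ((2 * r) ^ n * norm (ad A B)))"
    unfolding Mterm_def by (intro order_trans[OF norm_sum] sum_mono)
  also have "\<dots> \<le> 4 ^ (n + 1) * ((2 * r) ^ n * norm (ad A B))"
    unfolding sum_distrib_right[symmetric] using r
    by (intro mult_right_mono sum_abs_gcoef_le) auto
  also have "\<dots> = 4 * norm (ad A B) * (8 * r) ^ n"
    using power_mult_distrib[of "4::real" 2 n] by (simp add: power_mult_distrib)
  finally show ?thesis .
qed

lemma summable_norm_Mterm:
  assumes "norm A \<le> r" "norm B \<le> r" "8 * r < 1"
  shows "summable (\<lambda>n. norm (Mterm A B n))"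
proof -
  have "0 \<le> r"
    using assms(1) by (rule order_trans[OF norm_ge_zero])
  with assms(3) have "summable (\<lambda>n. 4 * norm (ad A B) * (8 * r) ^ n)"
    by (intro summable_mult summable_geometric) simp
  then show ?thesis
    by (rule summable_comparison_test'[where N = 0])
       (simp only: real_norm_def abs_norm_cancel norm_Mterm_le[OF assms(1,2)])
qed

lemma inner_add_Mterm_Suc:
  assumes "anti_hermitian A" "anti_hermitian B"
  shows "inner (A + B) (Mterm A B (Suc n))
    = (\<Sum>w\<in>words n. (gcoef (True # w) - gcoef (False # w)) * inner (ad A B) (adw A B w (ad A B)))"
proof -
  let ?K = "ad A B"
  have A: "inner (A + B) (ad A Z) = - inner ?K Z" and B: "inner (A + B) (ad B Z) = inner ?K Z" for Z
    using inner_ad_skew[OF assms(1), of "A + B" Z] inner_ad_skew[OF assms(2), of "A + B" Z]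
    by (simp_all add: ad_add_right)
  show ?thesis
    unfolding Mterm_def inner_sum_right sum_words_Suc
    by (intro sum.cong refl) (simp add: adw_Cons Xl_def A B algebra_simps del: inner_add_left)
qed

lemma inner_Mterm_Mterm:
  assumes "anti_hermitian A" "anti_hermitian B" "i \<le> n"
  shows "inner (Mterm A B i) (Mterm A B (n - i)) = (\<Sum>w\<in>words n.
    (-1) ^ i * gcoef (rev (take i w)) * gcoef (drop i w) * inner (ad A B) (adw A B w (ad A B)))"
proof -
  let ?K = "ad A B"
  let ?F = "\<lambda>c d. (-1) ^ i * gcoef (rev c) * gcoef d * inner ?K (adw A B (c @ d) ?K)"
  have "inner (Mterm A B i) (Mterm A B (n - i))
      = (\<Sum>c\<in>words i. \<Sum>d\<in>words (n - i). gcoef c * gcoef d * inner (adw A B c ?K) (adw A B d ?K))"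
    unfolding Mterm_def inner_sum_left
    by (intro sum.cong refl) (simp add: inner_sum_right sum_distrib_left mult_ac)
  also have "\<dots> = (\<Sum>c\<in>words i. \<Sum>d\<in>words (n - i). ?F (rev c) d)"
    by (intro sum.cong refl) (simp add: inner_adw_adjoint[OF assms(1,2)] adw_append)
  also have "\<dots> = (\<Sum>c\<in>words i. \<Sum>d\<in>words (n - i). ?F c d)"
    by (rule sum_words_rev[of "\<lambda>c. \<Sum>d\<in>words (n - i). ?F c d"])
  also have "\<dots> = (\<Sum>w\<in>words n. ?F (take i w) (drop i w))"
    by (rule sum_words_take_drop[symmetric, OF assms(3)])
  finally show ?thesis
    by simp
qed

text \<open>This identity is where the coefficients \<open>hcoef\<close> come from.\<close>

lemma Mterm_quadratic_identity:
  assumes "anti_hermitian A" "anti_hermitian B"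
  shows "2 * inner (A + B) (Mterm A B (Suc n)) + (\<Sum>i\<le>n. inner (Mterm A B i) (Mterm A B (n - i)))
    = Qform A B n"
proof -
  let ?I = "\<lambda>w. inner (ad A B) (adw A B w (ad A B))"
  have "(\<Sum>i\<le>n. inner (Mterm A B i) (Mterm A B (n - i)))
      = (\<Sum>w\<in>words n. (\<Sum>i\<le>n. (-1) ^ i * gcoef (rev (take i w)) * gcoef (drop i w)) * ?I w)"
    by (simp add: inner_Mterm_Mterm[OF assms] sum_distrib_right) (rule sum.swap)
  then show ?thesis
    unfolding Qform_def inner_add_Mterm_Suc[OF assms]
    by (simp add: hcoef_def atLeast0AtMost sum_distrib_left sum.distrib[symmetric] algebra_simps)
qed

lemma Cauchy_product_inner_sums:
  fixes a b :: "nat \<Rightarrow> 'a::euclidean_space"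
  assumes "summable (\<lambda>k. norm (a k))" "summable (\<lambda>k. norm (b k))"
  shows "(\<lambda>k. \<Sum>i\<le>k. inner (a i) (b (k - i))) sums inner (suminf a) (suminf b)"
proof -
  have coordinate_sums: "(\<lambda>k. \<Sum>i\<le>k. inner (a i) e * inner (b (k - i)) e)
      sums (inner (suminf a) e * inner (suminf b) e)" if "e \<in> Basis" for e
  proof -
    have summable_coordinate: "summable (\<lambda>k. norm (inner (x k) e))"
      if "summable (\<lambda>k. norm (x k))" for x :: "nat \<Rightarrow> 'a"
      using that by (rule summable_comparison_test'[where N = 0])
        (simp add: Basis_le_norm \<open>e \<in> Basis\<close>)
    have "inner (suminf x) e = (\<Sum>k. inner (x k) e)"
      if "summable (\<lambda>k. norm (x k))" for x :: "nat \<Rightarrow> 'a"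
      using bounded_linear.suminf[OF bounded_linear_inner_left summable_norm_cancel[OF that]] .
    then show ?thesis
      using Cauchy_product_sums[OF summable_coordinate summable_coordinate, OF assms] assms by simp
  qed
  have inner_coordinates: "inner (a i) (b j) = (\<Sum>e\<in>Basis. inner (a i) e * inner (b j) e)" for i j
    by (rule euclidean_inner)
  have "(\<lambda>k. \<Sum>i\<le>k. inner (a i) (b (k - i)))
      = (\<lambda>k. \<Sum>e\<in>Basis. \<Sum>i\<le>k. inner (a i) e * inner (b (k - i)) e)"
    by (intro ext) (simp only: inner_coordinates, rule sum.swap)
  with sums_sum[OF coordinate_sums] show ?thesis
    unfolding euclidean_inner[of "suminf a" "suminf b"] by simp
qed

lemma Qform_sums:
  assumes "anti_hermitian A" "anti_hermitian B" "summable (\<lambda>n. norm (Mterm A B n))"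
  shows "Qform A B sums (2 * inner (A + B) (\<Sum>n. Mterm A B n) + inner (\<Sum>n. Mterm A B n) (\<Sum>n. Mterm A B n))"
proof -
  define R where "R = (\<Sum>n. Mterm A B n)"
  have "(\<lambda>n. 2 * inner (A + B) (Mterm A B n)) sums (2 * inner (A + B) R)"
    unfolding R_def using summable_norm_cancel[OF assms(3)]
    by (intro sums_mult bounded_linear.sums[OF bounded_linear_inner_right] summable_sums)
  moreover have "inner (A + B) (Mterm A B 0) = 0"
    using inner_add_ad_eq_0[OF assms(1,2)] by (simp add: Mterm_def words_0 adw_Nil)
  ultimately have "(\<lambda>n. 2 * inner (A + B) (Mterm A B (Suc n))) sums (2 * inner (A + B) R)"
    by (subst sums_Suc_iff) simp
  moreover have "(\<lambda>n. \<Sum>i\<le>n. inner (Mterm A B i) (Mterm A B (n - i))) sums inner R R"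
    unfolding R_def by (rule Cauchy_product_inner_sums[OF assms(3) assms(3)])
  ultimately have "(\<lambda>n. 2 * inner (A + B) (Mterm A B (Suc n))
      + (\<Sum>i\<le>n. inner (Mterm A B i) (Mterm A B (n - i)))) sums (2 * inner (A + B) R + inner R R)"
    by (rule sums_add)
  then show ?thesis
    by (simp only: Mterm_quadratic_identity[OF assms(1,2)] R_def)
qed

lemma Qform_0: "Qform A B 0 = - 1/12 * norm (ad A B) ^ 2"
  by (simp add: Qform_def words_0 adw_Nil hcoef_Nil power2_norm_eq_inner)

lemma Qform_Suc_le:
  assumes "norm A \<le> r" "norm B \<le> r" "0 \<le> d" "d \<le> 1" "2 * r \<le> ln 2 / 3 * d"
  shows "Qform A B (Suc n) \<le> d * norm (ad A B) ^ 2 * hcoef_majorant n"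
proof -
  let ?K = "ad A B"
  have "0 \<le> r"
    using assms(1) by (rule order_trans[OF norm_ge_zero])
  have "(2 * r) ^ Suc n \<le> (ln 2 / 3 * d) ^ Suc n"
    using assms(5) \<open>0 \<le> r\<close> by (intro power_mono) auto
  also have "\<dots> = d ^ Suc n * (ln 2 / 3) ^ Suc n"
    by (simp only: power_mult_distrib mult.commute)
  also have "\<dots> \<le> d * (ln 2 / 3) ^ Suc n"
    using assms(3,4) by (intro mult_right_mono) (simp_all add: mult_left_le power_le_one)
  finally have radius: "(2 * r) ^ Suc n \<le> d * (ln 2 / 3) ^ Suc n" .
  have term_le: "\<bar>inner ?K (adw A B w ?K)\<bar> \<le> d * (ln 2 / 3) ^ Suc n * norm ?K ^ 2"
    if "w \<in> words (Suc n)" for w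
  proof -
    have "norm (adw A B w ?K) \<le> (2 * r) ^ Suc n * norm ?K"
      using norm_adw_le[OF assms(1,2), of w ?K] that by (simp only: mem_Collect_eq)
    then have "\<bar>inner ?K (adw A B w ?K)\<bar> \<le> norm ?K * ((2 * r) ^ Suc n * norm ?K)"
      by (intro order_trans[OF Cauchy_Schwarz_ineq2] mult_left_mono) auto
    also have "\<dots> \<le> norm ?K * (d * (ln 2 / 3) ^ Suc n * norm ?K)"
      by (intro mult_left_mono mult_right_mono radius) auto
    finally show ?thesis
      by (simp add: power2_eq_square mult_ac)
  qed
  have "Qform A B (Suc n) \<le> (\<Sum>w\<in>words (Suc n). \<bar>hcoef w\<bar> * (d * (ln 2 / 3) ^ Suc n * norm ?K ^ 2))"
    unfolding Qform_def
    by (rule order_trans[OF abs_ge_self], rule order_trans[OF sum_abs], rule sum_mono)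
       (unfold abs_mult, rule mult_left_mono[OF term_le], simp_all)
  also have "\<dots> = d * norm ?K ^ 2 * hcoef_majorant n"
    unfolding hcoef_majorant_def sum_distrib_left by (simp add: mult_ac)
  finally show ?thesis .
qed

lemma frob_parallelogram:
  "2 * (frob A)\<^sup>2 + 2 * (frob B)\<^sup>2 - (frob (A - B))\<^sup>2 = (frob (A + B))\<^sup>2"
  unfolding frob_eq_norm power2_norm_eq_inner
  by (simp add: inner_add_left inner_add_right inner_diff_left inner_diff_right inner_commute)

lemma norm_Mser_le:
  assumes "anti_hermitian A" "anti_hermitian B"
    and "norm A \<le> r" "norm B \<le> r" "2 * r \<le> ln 2 / 3 * deltaC"
  shows "norm (Mser A B) \<le> norm (A + B)"
proof -
  define R where "R = (\<Sum>n. Mterm A B n)"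
  have "ln 2 / 3 * deltaC \<le> ln 2 / 3"
    using deltaC_bounds(2) by (intro mult_left_le) simp_all
  then have "8 * r < 1"
    using assms(5) ln2_le_25_over_36 by linarith
  then have "Qform A B sums (2 * inner (A + B) R + inner R R)"
    unfolding R_def using assms by (intro Qform_sums summable_norm_Mterm)
  then have "(\<lambda>n. Qform A B (Suc n)) sums (2 * inner (A + B) R + inner R R - Qform A B 0)"
    by (simp add: sums_Suc_iff)
  moreover have "(\<lambda>n. deltaC * norm (ad A B) ^ 2 * hcoef_majorant n)
      sums (deltaC * norm (ad A B) ^ 2 * suminf hcoef_majorant)"
    by (intro sums_mult summable_sums summable_hcoef_majorant)
  ultimately have "2 * inner (A + B) R + inner R R - Qform A B 0
      \<le> deltaC * norm (ad A B) ^ 2 * suminf hcoef_majorant"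
    by (rule sums_le[OF Qform_Suc_le[OF assms(3,4) deltaC_bounds(1,2) assms(5)]])
  also have "\<dots> \<le> norm (ad A B) ^ 2 / 12"
    using mult_left_mono[OF deltaC_bounds(3), of "norm (ad A B) ^ 2"] by (simp add: mult_ac)
  finally have "2 * inner (A + B) R + inner R R \<le> 0"
    by (simp add: Qform_0)
  moreover have "(norm (Mser A B))\<^sup>2 = (norm (A + B))\<^sup>2 + (2 * inner (A + B) R + inner R R)"
    unfolding Mser_def R_def Mterm_def power2_norm_eq_inner
    by (simp add: inner_add_left inner_add_right inner_commute)
  ultimately show ?thesis
    by (simp add: power2_le_imp_le)
qed

theorem lemma5:
  fixes A B :: "complex^'n^'n"
  assumes "anti_hermitian A" and "anti_hermitian B"
    and "frob A < DeltaC" and "frob B < DeltaC"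
  shows "(frob (Mser A B))^2 \<le> 2 * (frob A)^2 + 2 * (frob B)^2 - (frob (A - B))^2"
proof -
  define r where "r = max (norm A) (norm B)"
  have "norm A \<le> r" "norm B \<le> r" "2 * r \<le> ln 2 / 3 * deltaC"
    using assms(3,4) by (auto simp: r_def frob_eq_norm DeltaC_def)
  then have "norm (Mser A B) \<le> norm (A + B)"
    by (rule norm_Mser_le[OF assms(1,2)])
  then show ?thesis
    unfolding frob_parallelogram by (simp add: frob_eq_norm power_mono)
qed

end
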